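(* Let $T$ be a finite tree with labels in $\{a,\varepsilon\}$ in which every node has at most $2$ children and every leaf and every node with $2$ children is labelled $\varepsilon$. If $T$ contains $n\ge 1$ nodes labelled $a$, then $\mathrm{score}(T)\ge \log_2 n$.
   Context: The score of such a tree is defined recursively: if $T$ is a single leaf (labelled $\varepsilon$), $\mathrm{score}(T)=0$; if the root of $T$ has label $\gamma$ and exactly one child subtree $T_1$, then $\mathrm{score}(T)=\mathrm{score}(T_1)+\iota(\gamma)$ where $\iota(a)=1$, $\iota(\varepsilon)=0$; if the root (labelled $\varepsilon$) has child subtrees $T_1,\dots,T_k$ with $k\ge2$, then $\mathrm{score}(T)=\max_{1\le i\le k}\big(\mathrm{score}(T_i)+\iota\big(\sum_{j\ne i}\mathrm{score}(T_j)\big)\big)$, where for a natural number $x$, $\iota(x)=0$ if $x=0$ and $\iota(x)=1$ if $x>0$. *)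

theory Defs
  imports Complex_Main
begin

datatype lab = A | Eps

datatype tree = Node lab "tree list"

definition iota_nat :: "nat \<Rightarrow> nat" where
  "iota_nat x = (if x = 0 then 0 else 1)"

definition iota_lab :: "lab \<Rightarrow> nat" where
  "iota_lab l = (if l = A then 1 else 0)"

definition combine :: "nat list \<Rightarrow> nat" where
  "combine ss = Max {ss ! i + iota_nat (\<Sum>j\<in>{..<length ss} - {i}. ss ! j) | i. i < length ss}"

fun score :: "tree \<Rightarrow> nat" where
  "score (Node l ts) =
     (case map score ts of
        [] \<Rightarrow> 0
      | [s] \<Rightarrow> s + iota_lab l
      | ss \<Rightarrow> combine ss)"

fun wf_tree :: "tree \<Rightarrow> bool" where
  "wf_tree (Node l ts) =
     (length ts \<le> 2 \<and> ((ts = [] \<or> length ts = 2) \<longrightarrow> l = Eps) \<and> (\<forall>t\<in>set ts. wf_tree t))"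

fun count_a :: "tree \<Rightarrow> nat" where
  "count_a (Node l ts) = iota_lab l + sum_list (map count_a ts)"

end

theory Submission
  imports Defs
begin

text \<open>
  The number of a-labelled nodes grows at most exponentially in the score: by induction on
  the tree, count_a T < 2 ^ score T. A unary a-node doubles the bound and adds one; at a
  binary node whose subtrees have scores s' \<le> s, either s' = 0 (so the smaller subtree has no
  a-node) or the score rises to s + 1 and 2 ^ s' + 2 ^ s \<le> 2 ^ (s + 1).
\<close>

lemma combine_pair: "combine [x, y] = max (x + iota_nat y) (y + iota_nat x)"
proof -
  define f where
    "f i = [x, y] ! i + iota_nat (\<Sum>j\<in>{..<length [x, y]} - {i}. [x, y] ! j)" for i
  have "{..<length [x, y]} - {0} = {1}" "{..<length [x, y]} - {1} = {0}"
    by auto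
  then have "f 0 = x + iota_nat y" "f 1 = y + iota_nat x"
    by (simp_all add: f_def)
  moreover have "{f i | i. i < length [x, y]} = {f 0, f 1}"
    using less_2_cases by (auto simp: numeral_2_eq_2)
  ultimately show ?thesis
    unfolding combine_def by (fold f_def) simp
qed

lemma add_less_pow2_max_iota:
  fixes c c' s s' :: nat
  assumes "c < 2 ^ s" and "c' < 2 ^ s'"
  shows "c + c' < 2 ^ max (s + iota_nat s') (s' + iota_nat s)"
proof -
  have "c + c' < 2 ^ max (s + iota_nat s') (s' + iota_nat s)"
    if "c < 2 ^ s" "c' < 2 ^ s'" "s' \<le> s" for c c' s s' :: nat
  proof (cases "s' = 0")
    case True
    then have "c' = 0" using that(2) by simp
    moreover have "(2::nat) ^ s \<le> 2 ^ max (s + iota_nat s') (s' + iota_nat s)"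
      by (rule power_increasing) auto
    ultimately show ?thesis using that(1) by linarith
  next
    case False
    have "(2::nat) ^ s' \<le> 2 ^ s"
      using \<open>s' \<le> s\<close> by (rule power_increasing) simp
    moreover have "(2::nat) ^ Suc s \<le> 2 ^ max (s + iota_nat s') (s' + iota_nat s)"
      by (rule power_increasing) (use False in \<open>auto simp: iota_nat_def\<close>)
    moreover have "(2::nat) ^ Suc s = 2 ^ s + 2 ^ s"
      by simp
    ultimately show ?thesis using that(1,2) by linarith
  qed
  then show ?thesis
    using assms by (cases "s' \<le> s") (force simp: max.commute add.commute)+
qed

lemma count_a_less_pow2_score: "wf_tree T \<Longrightarrow> count_a T < 2 ^ score T"
proof (induction T rule: score.induct)
  case (1 l ts)
  consider "ts = []" | t where "ts = [t]" | t u where "ts = [t, u]"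
    using \<open>wf_tree (Node l ts)\<close> by (auto simp: numeral_2_eq_2 le_Suc_eq length_Suc_conv)
  then show ?case
  proof cases
    case 1
    then show ?thesis using "1.prems" by (simp add: iota_lab_def)
  next
    case (2 t)
    then have "count_a t < 2 ^ score t" using "1.IH" "1.prems" by simp
    then show ?thesis using 2 by (cases l) (auto simp: iota_lab_def)
  next
    case (3 t u)
    then have "count_a t < 2 ^ score t" "count_a u < 2 ^ score u" "l = Eps"
      using "1.IH" "1.prems" by auto
    then show ?thesis
      using 3 add_less_pow2_max_iota by (simp add: combine_pair iota_lab_def)
  qed
qed

theorem mainTheorem6:
  fixes T :: tree and n :: nat
  assumes "wf_tree T" and "count_a T = n" and "n \<ge> 1"
  shows "real (score T) \<ge> log 2 (real n)"
proof -
  have "real n < 2 powr real (score T)"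
    using count_a_less_pow2_score[OF assms(1)] assms(2)
    by (simp add: powr_realpow flip: of_nat_less_iff)
  then show ?thesis
    using assms(3) by (simp add: log_less_iff less_imp_le)
qed

end
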